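(* Let $m\in\mathbb{R}$, $0\le\delta\le\rho\le1$ with $\delta<1$, $a\in S^m_{\rho,\delta}$, and let $\eta\in C^\infty(\mathbb{R}^d)$ be supported in $\{|\xi|\le2\}$. Put $a_0(x,\xi)=a(x,\xi)\eta(\xi)$. Then there is $C$ independent of $w$ and $f$ such that $$\int_{\mathbb{R}^d}|T_{a_0}f|^2w\le C\int_{\mathbb{R}^d}|f|^2A_1^*w$$ for all non-negative $w\in L^1_{\mathrm{loc}}(\mathbb{R}^d)$ and all Schwartz $f$, where $A_1^*w(x)=\sup_{r\ge1}\frac1{|B(x,r)|}\int_{B(x,r)}w$.
   Context: The Hörmander class $S^m_{\rho,\delta}$ is the set of $a\in C^\infty(\mathbb{R}^d\times\mathbb{R}^d)$ with $|\partial_x^\nu\partial_\xi^\sigma a(x,\xi)|\le C_{\nu,\sigma}(1+|\xi|)^{m-\rho|\sigma|+\delta|\nu|}$ for all multi-indices $\nu,\sigma$. For a symbol $b$ and Schwartz $f$, $T_bf(x)=\int e^{ix\cdot\xi}b(x,\xi)\widehat f(\xi)d\xi$. $B(x,r)$ is the ball of centre $x$ and radius $r$. *)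

theory Defs
  imports "HOL-Analysis.Analysis"
begin

definition ddir :: "'a::real_normed_vector \<Rightarrow> ('a \<Rightarrow> 'b::real_normed_vector) \<Rightarrow> 'a \<Rightarrow> 'b" where
  "ddir v g x = frechet_derivative g (at x) v"

fun iter_ddir :: "'a::real_normed_vector list \<Rightarrow> ('a \<Rightarrow> 'b::real_normed_vector) \<Rightarrow> 'a \<Rightarrow> 'b" where
  "iter_ddir [] g = g"
| "iter_ddir (v # vs) g = ddir v (iter_ddir vs g)"

definition smooth :: "('a::real_normed_vector \<Rightarrow> 'b::real_normed_vector) \<Rightarrow> bool" where
  "smooth g \<longleftrightarrow> (\<forall>vs x. iter_ddir vs g differentiable (at x))"

definition xdir :: "'n::finite \<Rightarrow> (real^'n) \<times> (real^'n)" where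
  "xdir i = (axis i 1, 0)"

definition xidir :: "'n::finite \<Rightarrow> (real^'n) \<times> (real^'n)" where
  "xidir i = (0, axis i 1)"

text \<open>Hoermander class S^m_{rho,delta}; a multi-index derivative is given by lists of
  coordinate directions (order irrelevant for smooth functions).\<close>
definition hoermander :: "real \<Rightarrow> real \<Rightarrow> real \<Rightarrow> ((real^'n::finite) \<times> (real^'n) \<Rightarrow> complex) \<Rightarrow> bool" where
  "hoermander m \<rho> \<delta> a \<longleftrightarrow> smooth a \<and>
     (\<forall>(nu::'n list) (sigma::'n list). \<exists>C. \<forall>x \<xi>.
        norm (iter_ddir (map xdir nu @ map xidir sigma) a (x, \<xi>))
          \<le> C * (1 + norm \<xi>) powr (m - \<rho> * real (length sigma) + \<delta> * real (length nu)))"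

definition schwartz :: "(real^'n::finite \<Rightarrow> complex) \<Rightarrow> bool" where
  "schwartz f \<longleftrightarrow> smooth f \<and>
     (\<forall>(alpha::'n list) (k::nat). \<exists>C. \<forall>x.
        (1 + norm x) ^ k * norm (iter_ddir (map (\<lambda>i. axis i 1) alpha) f x) \<le> C)"

text \<open>Fourier transform (the normalising constant is irrelevant for the statement).\<close>
definition fourier :: "(real^'n::finite \<Rightarrow> complex) \<Rightarrow> real^'n \<Rightarrow> complex" where
  "fourier f \<xi> = (LINT x|lborel. cis (- (x \<bullet> \<xi>)) * f x)"

definition pdo :: "((real^'n::finite) \<times> (real^'n) \<Rightarrow> complex) \<Rightarrow> (real^'n \<Rightarrow> complex) \<Rightarrow> real^'n \<Rightarrow> complex" where
  "pdo b f x = (LINT \<xi>|lborel. cis (x \<bullet> \<xi>) * b (x, \<xi>) * fourier f \<xi>)"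

definition loc_integrable :: "(real^'n::finite \<Rightarrow> real) \<Rightarrow> bool" where
  "loc_integrable w \<longleftrightarrow> w \<in> borel_measurable lborel \<and>
     (\<forall>K. compact K \<longrightarrow> set_integrable lborel K w)"

definition A1star :: "(real^'n::finite \<Rightarrow> real) \<Rightarrow> real^'n \<Rightarrow> ennreal" where
  "A1star w x = (SUP r\<in>{1..}. (\<integral>\<^sup>+ y. ennreal (w y) * indicator (ball x r) y \<partial>lborel)
                                / emeasure lborel (ball x r))"

end

theory Submission
  imports Defs
begin

text \<open>Because \<open>\<eta>\<close> localises to \<open>|\<xi>| \<le> 2\<close>, the operator is given by a kernel,
  \<open>T f x = \<integral> K(x, x - y) f y dy\<close> with \<open>K(x, z) = \<integral> e^{iz\<xi>} a(x, \<xi>) \<eta>(\<xi>) d\<xi>\<close>.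
  Finite differences in \<open>\<xi>\<close> with step \<open>\<pi>/z\<^sub>i\<close> (in place of integration by parts) show
  \<open>|K(x, z)| \<le> C (1 + |z|)^{-d-1}\<close> uniformly in \<open>x\<close>, using only bounds of the
  \<open>\<xi>\<close>-derivatives of \<open>a\<close> on a bounded set. By Cauchy--Schwarz,
  \<open>|T f x|\<^sup>2 \<le> C \<integral> (1 + |x - y|)^{-d-1} |f y|\<^sup>2 dy\<close>; integrating against \<open>w\<close> and
  exchanging the integrals leaves \<open>\<integral> (1 + |x - y|)^{-d-1} w x dx\<close>, which a dyadic
  decomposition into balls of radius \<open>2^j \<ge> 1\<close> bounds by \<open>A\<^sub>1\<^sup>* w y\<close>.\<close>

section \<open>Derivatives along lines and finite differences\<close>

definition deriv_chain :: "(nat \<Rightarrow> real \<Rightarrow> 'a::real_normed_vector) \<Rightarrow> bool" where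
  "deriv_chain G \<longleftrightarrow> (\<forall>k s. (G k has_vector_derivative G (Suc k) s) (at s))"

fun fdiff :: "real \<Rightarrow> nat \<Rightarrow> (real \<Rightarrow> 'a::ab_group_add) \<Rightarrow> real \<Rightarrow> 'a" where
  "fdiff h 0 f = f"
| "fdiff h (Suc n) f = (\<lambda>s. fdiff h n f (s + h) - fdiff h n f s)"

lemma fdiff_Suc': "fdiff h (Suc n) f = fdiff h n (\<lambda>s. f (s + h) - f s)"
proof -
  have "fdiff h n (\<lambda>s. f (s + h) - f s) = (\<lambda>s. fdiff h n f (s + h) - fdiff h n f s)"
    by (induction n) (auto simp: add.assoc)
  then show ?thesis by simp
qed

lemma norm_diff_le_vector_derivative_bound:
  fixes f :: "real \<Rightarrow> 'a::real_normed_vector"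
  assumes "\<And>s. (f has_vector_derivative f' s) (at s)" "\<And>s. norm (f' s) \<le> M"
  shows "norm (f b - f a) \<le> M * \<bar>b - a\<bar>"
proof (rule differentiable_bound[where S=UNIV and f'="\<lambda>s t. t *\<^sub>R f' s", simplified])
  show "(f has_derivative (\<lambda>t. t *\<^sub>R f' s)) (at s)" for s
    using assms(1) by (simp add: has_vector_derivative_def)
  show "onorm (\<lambda>t. t *\<^sub>R f' s) \<le> M" for s
    using assms(2)[of s] by (simp add: onorm_scaleR_left[OF bounded_linear_ident] onorm_id)
qed

lemma deriv_chain_diff:
  assumes "deriv_chain G"
  shows "deriv_chain (\<lambda>k s. G k (s + h) - G k s)"
  unfolding deriv_chain_def
proof (intro allI)
  fix k s
  have "((\<lambda>s. s + h) has_vector_derivative 1) (at s)"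
    by (auto intro!: derivative_eq_intros simp: has_real_derivative_iff_has_vector_derivative[symmetric])
  then have "((G k \<circ> (\<lambda>s. s + h)) has_vector_derivative G (Suc k) (s + h)) (at s)"
    using vector_diff_chain_at assms unfolding deriv_chain_def by fastforce
  then have "((\<lambda>s. G k (s + h)) has_vector_derivative G (Suc k) (s + h)) (at s)"
    by (simp add: o_def)
  then show "((\<lambda>s. G k (s + h) - G k s) has_vector_derivative G (Suc k) (s + h) - G (Suc k) s) (at s)"
    using assms unfolding deriv_chain_def by (auto intro!: has_vector_derivative_diff)
qed

lemma norm_fdiff_le:
  assumes "deriv_chain G" "\<And>s. norm (G n s) \<le> M"
  shows "norm (fdiff h n (G 0) s) \<le> \<bar>h\<bar> ^ n * M"
  using assms
proof (induction n arbitrary: G M s)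
  case 0
  then show ?case by simp
next
  case (Suc n)
  let ?G = "\<lambda>k s. G k (s + h) - G k s"
  have "norm (?G n s) \<le> \<bar>h\<bar> * M" for s
    using norm_diff_le_vector_derivative_bound[of "G n" "G (Suc n)" M "s + h" s] Suc.prems
    by (auto simp: deriv_chain_def mult.commute)
  then have "norm (fdiff h n (?G 0) s) \<le> \<bar>h\<bar> ^ n * (\<bar>h\<bar> * M)"
    by (rule Suc.IH[OF deriv_chain_diff[OF Suc.prems(1)]])
  then show ?case by (simp only: fdiff_Suc') (simp add: algebra_simps)
qed

lemma fdiff_eq_0:
  assumes "\<And>s. \<bar>s - t\<bar> \<le> real n * \<bar>h\<bar> \<Longrightarrow> f s = 0"
  shows "fdiff h n f t = 0"
  using assms
proof (induction n arbitrary: t)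
  case 0
  then show ?case by simp
next
  case (Suc n)
  have "fdiff h n f (t + h) = 0" "fdiff h n f t = 0"
    by (rule Suc.IH; use Suc.prems in \<open>auto simp: algebra_simps abs_if split: if_splits\<close>)+
  then show ?case by simp
qed

definition leibniz ::
    "(nat \<Rightarrow> real \<Rightarrow> 'a::real_normed_algebra_1) \<Rightarrow> (nat \<Rightarrow> real \<Rightarrow> 'a) \<Rightarrow> nat \<Rightarrow> real \<Rightarrow> 'a" where
  "leibniz G H k s = (\<Sum>j\<le>k. of_nat (k choose j) * G j s * H (k - j) s)"

lemma leibniz_0 [simp]: "leibniz G H 0 s = G 0 s * H 0 s"
  by (simp add: leibniz_def)

lemma leibniz_Suc:
  "leibniz G H (Suc k) s = leibniz (\<lambda>k. G (Suc k)) H k s + leibniz G (\<lambda>k. H (Suc k)) k s"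
proof -
  have "leibniz G H (Suc k) s = (\<Sum>j\<le>Suc k. of_nat (k choose j) * G j s * H (Suc k - j) s)
      + (\<Sum>j\<le>Suc k. of_nat (if j = 0 then 0 else k choose (j - 1)) * G j s * H (Suc k - j) s)"
    unfolding leibniz_def sum.distrib[symmetric]
    by (intro sum.cong refl) (auto simp: algebra_simps gr0_conv_Suc)
  also have "(\<Sum>j\<le>Suc k. of_nat (k choose j) * G j s * H (Suc k - j) s) = leibniz G (\<lambda>k. H (Suc k)) k s"
    unfolding leibniz_def by (simp add: Suc_diff_le binomial_eq_0)
  also have "(\<Sum>j\<le>Suc k. of_nat (if j = 0 then 0 else k choose (j - 1)) * G j s * H (Suc k - j) s)
      = leibniz (\<lambda>k. G (Suc k)) H k s"
    unfolding leibniz_def by (subst sum.atMost_Suc_shift) simp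
  finally show ?thesis by simp
qed

lemma deriv_chain_leibniz:
  assumes "deriv_chain G" "deriv_chain H"
  shows "deriv_chain (leibniz G H)"
  unfolding deriv_chain_def
proof (intro allI)
  fix k s
  show "(leibniz G H k has_vector_derivative leibniz G H (Suc k) s) (at s)"
    using assms
  proof (induction k arbitrary: G H)
    case 0
    then show ?case
      by (auto intro!: has_vector_derivative_mult[THEN has_vector_derivative_eq_rhs]
          simp: deriv_chain_def leibniz_def algebra_simps)
  next
    case (Suc k)
    have "deriv_chain (\<lambda>k. G (Suc k))" "deriv_chain (\<lambda>k. H (Suc k))"
      using Suc.prems unfolding deriv_chain_def by auto
    with Suc.IH Suc.prems show ?case
      unfolding leibniz_Suc[abs_def] leibniz_Suc[of G H "Suc k"]
      by (auto intro!: has_vector_derivative_add)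
  qed
qed

lemma smooth_continuous: "smooth g \<Longrightarrow> continuous_on UNIV (iter_ddir vs g)"
  unfolding smooth_def
  by (meson continuous_at_imp_continuous_on differentiable_imp_continuous_within)

definition line_derivs ::
    "('a::real_normed_vector \<Rightarrow> 'b::real_normed_vector) \<Rightarrow> 'a \<Rightarrow> 'a \<Rightarrow> nat \<Rightarrow> real \<Rightarrow> 'b" where
  "line_derivs g v p k s = iter_ddir (replicate k v) g (p + s *\<^sub>R v)"

lemma smooth_deriv_chain_line_derivs:
  fixes g :: "'a::real_normed_vector \<Rightarrow> 'b::real_normed_vector"
  assumes "smooth g"
  shows "deriv_chain (line_derivs g v p)"
  unfolding deriv_chain_def
proof (intro allI)
  fix k s
  define F where "F = iter_ddir (replicate k v) g"
  define q where "q = p + s *\<^sub>R v"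
  have dF: "(F has_derivative frechet_derivative F (at q)) (at q)"
    using assms unfolding smooth_def F_def by (simp add: frechet_derivative_works[symmetric])
  have "((F \<circ> (\<lambda>s. p + s *\<^sub>R v)) has_derivative (frechet_derivative F (at q) \<circ> (\<lambda>t. t *\<^sub>R v))) (at s)"
    by (rule diff_chain_at) (use dF in \<open>auto intro!: derivative_eq_intros simp: q_def\<close>)
  moreover have "frechet_derivative F (at q) \<circ> (\<lambda>t. t *\<^sub>R v) = (\<lambda>t. t *\<^sub>R frechet_derivative F (at q) v)"
    using has_derivative_linear[OF dF] by (auto simp: o_def linear_scale)
  ultimately show "(line_derivs g v p k has_vector_derivative line_derivs g v p (Suc k) s) (at s)"
    unfolding has_vector_derivative_def line_derivs_def[abs_def] by (simp add: F_def q_def ddir_def o_def)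
qed

lemma iter_ddir_eq_0_on_open:
  assumes "open U" "\<And>y. y \<in> U \<Longrightarrow> g y = 0" "y \<in> U"
  shows "iter_ddir vs g y = 0"
  using assms(3)
proof (induction vs arbitrary: y)
  case Nil
  then show ?case using assms(2) by simp
next
  case (Cons v vs)
  have "(iter_ddir vs g has_derivative (\<lambda>_. 0)) (at y)"
    by (rule has_derivative_transform_within_open[of "\<lambda>_. 0" "\<lambda>_. 0" y UNIV U])
       (use Cons assms(1) in auto)
  then show ?case by (simp add: ddir_def frechet_derivative_at[symmetric])
qed

lemma iter_ddir_eq_0_outside_cball:
  fixes g :: "'a::real_normed_vector \<Rightarrow> 'b::real_normed_vector" and \<xi> :: 'a
  assumes "\<And>\<xi>. R < norm \<xi> \<Longrightarrow> g \<xi> = 0" "R < norm \<xi>"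
  shows "iter_ddir vs g \<xi> = 0"
  by (rule iter_ddir_eq_0_on_open[of "{\<xi>. R < norm \<xi>}"])
     (use assms in \<open>auto simp: open_Collect_less continuous_on_norm_id\<close>)

lemma smooth_compact_support_bounded:
  fixes g :: "'a::euclidean_space \<Rightarrow> 'b::real_normed_vector"
  assumes "smooth g" "\<And>\<xi>. R < norm \<xi> \<Longrightarrow> g \<xi> = 0"
  shows "\<exists>B\<ge>0. \<forall>\<xi>. norm (iter_ddir vs g \<xi>) \<le> B"
proof -
  have "compact (iter_ddir vs g ` cball 0 R)"
    by (rule compact_continuous_image)
       (use smooth_continuous[OF assms(1)] in \<open>auto intro: continuous_on_subset\<close>)
  then obtain B where B: "\<And>\<xi>. \<xi> \<in> cball 0 R \<Longrightarrow> norm (iter_ddir vs g \<xi>) \<le> B"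
    using compact_imp_bounded bounded_iff by (metis imageI)
  have "norm (iter_ddir vs g \<xi>) \<le> max B 0" for \<xi>
    using B[of \<xi>] iter_ddir_eq_0_outside_cball[OF assms(2), where \<xi>=\<xi>] by force
  then show ?thesis by (intro exI[of _ "max B 0"]) auto
qed

lemma powr_le_powr_abs:
  fixes x R e :: real
  assumes "0 \<le> x" "x \<le> R"
  shows "(1 + x) powr e \<le> (1 + R) powr \<bar>e\<bar>"
proof (cases "e \<ge> 0")
  case True
  then have "(1 + x) powr e \<le> (1 + R) powr e" using assms by (intro powr_mono2) simp_all
  then show ?thesis using True by simp
next
  case False
  then have "(1 + x) powr e \<le> (1 + x) powr 0" using assms by (intro powr_mono) auto
  also have "\<dots> \<le> (1 + R) powr \<bar>e\<bar>" using assms by (auto intro: ge_one_powr_ge_zero)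
  finally show ?thesis .
qed

lemma hoermander_smooth: "hoermander m \<rho> \<delta> a \<Longrightarrow> smooth a"
  unfolding hoermander_def by simp

lemma hoermander_xi_derivs_bounded:
  fixes a :: "(real^'n::finite) \<times> (real^'n) \<Rightarrow> complex"
  assumes "hoermander m \<rho> \<delta> a"
  shows "\<exists>B\<ge>0. \<forall>x \<xi>. norm \<xi> \<le> R \<longrightarrow> norm (iter_ddir (map xidir \<sigma>) a (x, \<xi>)) \<le> B"
proof -
  define e where "e = m - \<rho> * real (length \<sigma>)"
  have "\<exists>C. \<forall>x \<xi>. norm (iter_ddir (map xdir [] @ map xidir \<sigma>) a (x, \<xi>))
      \<le> C * (1 + norm \<xi>) powr (m - \<rho> * real (length \<sigma>) + \<delta> * real (length ([] :: 'n list)))"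
    using assms unfolding hoermander_def by blast
  then obtain C where C: "\<And>x \<xi>. norm (iter_ddir (map xidir \<sigma>) a (x, \<xi>)) \<le> C * (1 + norm \<xi>) powr e"
    by (auto simp: e_def)
  have "norm (iter_ddir (map xidir \<sigma>) a (x, \<xi>)) \<le> max C 0 * (1 + R) powr \<bar>e\<bar>"
    if "norm \<xi> \<le> R" for x \<xi>
  proof -
    have "C * (1 + norm \<xi>) powr e \<le> max C 0 * (1 + norm \<xi>) powr e"
      by (intro mult_right_mono) auto
    also have "\<dots> \<le> max C 0 * (1 + R) powr \<bar>e\<bar>"
      using that by (intro mult_left_mono powr_le_powr_abs) auto
    finally show ?thesis using C[of x \<xi>] by linarith
  qed
  then show ?thesis by (intro exI[of _ "max C 0 * (1 + R) powr \<bar>e\<bar>"]) auto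
qed

lemma continuous_on_cutoff_symbol:
  fixes a :: "(real^'n::finite) \<times> (real^'n) \<Rightarrow> complex" and \<eta> :: "real^'n \<Rightarrow> complex"
  assumes "hoermander m \<rho> \<delta> a" "smooth \<eta>"
  shows "continuous_on UNIV (\<lambda>\<xi>. a (x, \<xi>) * \<eta> \<xi>)"
proof -
  have "continuous_on UNIV (Pair x :: real^'n \<Rightarrow> _)"
    by (intro continuous_intros)
  then have "continuous_on UNIV (\<lambda>\<xi>. a (x, \<xi>))"
    using smooth_continuous[OF hoermander_smooth[OF assms(1)], of "[]"]
    by (auto intro: continuous_on_compose2)
  with smooth_continuous[OF assms(2), of "[]"] show ?thesis
    by (auto intro: continuous_intros)
qed

section \<open>Decay of Fourier integrals\<close>

lemma integrable_continuous_compact_support: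
  fixes g :: "'a::euclidean_space \<Rightarrow> 'b::{banach, second_countable_topology}"
  assumes "continuous_on UNIV g" "\<And>\<xi>. R < norm \<xi> \<Longrightarrow> g \<xi> = 0"
  shows "integrable lborel g"
proof -
  have "integrable lborel (\<lambda>\<xi>. indicator (cball 0 R) \<xi> *\<^sub>R g \<xi>)"
    by (rule borel_integrable_compact) (use assms(1) in \<open>auto intro: continuous_on_subset\<close>)
  moreover have "indicator (cball 0 R) \<xi> *\<^sub>R g \<xi> = g \<xi>" for \<xi>
    using assms(2)[of \<xi>] by (auto simp: indicator_def)
  ultimately show ?thesis by simp
qed

lemma norm_integral_le_ball_volume:
  fixes g :: "'a::euclidean_space \<Rightarrow> 'b::{banach, second_countable_topology}"
  assumes "integrable lborel g" "\<And>\<xi>. norm (g \<xi>) \<le> B" "\<And>\<xi>. R < norm \<xi> \<Longrightarrow> g \<xi> = 0" "0 \<le> R"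
  shows "norm (\<integral>\<xi>. g \<xi> \<partial>lborel) \<le> B * unit_ball_vol DIM('a) * R ^ DIM('a)"
proof -
  have B: "0 \<le> B" using assms(2) by (meson norm_ge_zero order_trans)
  have "ennreal (norm (\<integral>\<xi>. g \<xi> \<partial>lborel)) \<le> (\<integral>\<^sup>+\<xi>. norm (g \<xi>) \<partial>lborel)"
    by (rule integral_norm_bound_ennreal[OF assms(1)])
  also have "\<dots> \<le> (\<integral>\<^sup>+\<xi>. ennreal B * indicator (cball (0::'a) R) \<xi> \<partial>lborel)"
  proof (rule nn_integral_mono)
    fix \<xi> :: 'a
    show "ennreal (norm (g \<xi>)) \<le> ennreal B * indicator (cball 0 R) \<xi>"
      using assms(2,3)[of \<xi>] by (cases "\<xi> \<in> cball 0 R") (auto intro: ennreal_leI)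
  qed
  also have "\<dots> = ennreal (B * unit_ball_vol DIM('a) * R ^ DIM('a))"
    using assms(4) B by (simp add: nn_integral_cmult_indicator emeasure_cball ennreal_mult mult.assoc)
  finally show ?thesis
    using assms(4) B by (subst (asm) ennreal_le_iff) auto
qed

lemma integral_cis_translate:
  fixes g :: "'a::euclidean_space \<Rightarrow> complex"
  assumes "g \<in> borel_measurable borel"
  shows "(\<integral>\<xi>. cis (z \<bullet> \<xi>) * g (\<xi> + c) \<partial>lborel)
    = cis (- (z \<bullet> c)) * (\<integral>\<xi>. cis (z \<bullet> \<xi>) * g \<xi> \<partial>lborel)"
proof -
  let ?G = "\<lambda>\<zeta>. cis (z \<bullet> (\<zeta> - c)) * g \<zeta>"
  have G: "?G \<in> borel_measurable borel"
    by (rule borel_measurable_times[OF _ assms]) (intro borel_measurable_continuous_onI continuous_intros)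
  have "(\<integral>\<xi>. cis (z \<bullet> \<xi>) * g (\<xi> + c) \<partial>lborel) = (\<integral>\<xi>. ?G (c + \<xi>) \<partial>lborel)"
    by (simp add: add.commute)
  also have "\<dots> = (\<integral>\<zeta>. ?G \<zeta> \<partial>distr lborel borel ((+) c))"
    using G by (intro integral_distr[symmetric]) auto
  also have "\<dots> = (\<integral>\<zeta>. cis (- (z \<bullet> c)) * (cis (z \<bullet> \<zeta>) * g \<zeta>) \<partial>lborel)"
  proof -
    have "cis (z \<bullet> (\<zeta> - c)) = cis (- (z \<bullet> c)) * cis (z \<bullet> \<zeta>)" for \<zeta>
      by (simp add: cis_mult inner_diff_right)
    then show ?thesis by (simp add: lborel_distr_plus mult.assoc)
  qed
  finally show ?thesis by simp
qed

lemma continuous_on_fdiff_line: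
  fixes g :: "'a::real_normed_vector \<Rightarrow> 'b::real_normed_vector"
  assumes "continuous_on UNIV g"
  shows "continuous_on UNIV (\<lambda>\<xi>. fdiff h n (\<lambda>s. g (\<xi> + s *\<^sub>R v)) t)"
proof (induction n arbitrary: t)
  case 0
  have "continuous_on UNIV (\<lambda>\<xi>. \<xi> + t *\<^sub>R v)"
    by (intro continuous_intros)
  then show ?case by (auto intro: continuous_on_compose2[OF assms])
next
  case (Suc n)
  then show ?case by (auto intro!: continuous_intros)
qed

lemma fdiff_line_eq_0:
  fixes g :: "'a::real_normed_vector \<Rightarrow> 'b::ab_group_add"
  assumes "\<And>\<xi>. R < norm \<xi> \<Longrightarrow> g \<xi> = 0" "norm v = 1" "R + \<bar>t\<bar> + n * \<bar>h\<bar> < norm \<xi>"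
  shows "fdiff h n (\<lambda>s. g (\<xi> + s *\<^sub>R v)) t = 0"
proof (rule fdiff_eq_0)
  fix s assume "\<bar>s - t\<bar> \<le> real n * \<bar>h\<bar>"
  moreover have "norm \<xi> \<le> norm (\<xi> + s *\<^sub>R v) + \<bar>s\<bar>"
    using norm_triangle_ineq4[of "\<xi> + s *\<^sub>R v" "s *\<^sub>R v"] assms(2) by simp
  ultimately show "g (\<xi> + s *\<^sub>R v) = 0"
    using assms(1,3) by auto
qed

lemma integrable_fdiff_line:
  fixes g :: "'a::euclidean_space \<Rightarrow> complex"
  assumes "continuous_on UNIV g" "\<And>\<xi>. R < norm \<xi> \<Longrightarrow> g \<xi> = 0" "norm v = 1"
  shows "integrable lborel (\<lambda>\<xi>. cis (z \<bullet> \<xi>) * fdiff h n (\<lambda>s. g (\<xi> + s *\<^sub>R v)) t)"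
  using assms continuous_on_fdiff_line[OF assms(1)] fdiff_line_eq_0[OF assms(2,3)]
  by (intro integrable_continuous_compact_support[where R="R + \<bar>t\<bar> + n * \<bar>h\<bar>"])
     (auto intro!: continuous_intros)

text \<open>With step \<open>h = \<pi> / (z \<bullet> v)\<close> each difference along \<open>v\<close> multiplies the Fourier
  integral by \<open>e^{-i\<pi>} - 1 = -2\<close>; this replaces integration by parts.\<close>

lemma integral_fdiff_line:
  fixes g :: "'a::euclidean_space \<Rightarrow> complex"
  assumes "continuous_on UNIV g" "\<And>\<xi>. R < norm \<xi> \<Longrightarrow> g \<xi> = 0" "norm v = 1"
    and "h * (z \<bullet> v) = pi"
  shows "(\<integral>\<xi>. cis (z \<bullet> \<xi>) * fdiff h n (\<lambda>s. g (\<xi> + s *\<^sub>R v)) t \<partial>lborel)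
    = (-2) ^ n * cis (- (t * (z \<bullet> v))) * (\<integral>\<xi>. cis (z \<bullet> \<xi>) * g \<xi> \<partial>lborel)"
proof (induction n arbitrary: t)
  case 0
  have "g \<in> borel_measurable borel"
    using assms(1) by (rule borel_measurable_continuous_onI)
  from integral_cis_translate[OF this, of z "t *\<^sub>R v"] show ?case
    by simp
next
  case (Suc n)
  let ?I = "\<integral>\<xi>. cis (z \<bullet> \<xi>) * g \<xi> \<partial>lborel" and ?c = "\<lambda>t. cis (- (t * (z \<bullet> v)))"
  have "- ((t + h) * (z \<bullet> v)) = - (t * (z \<bullet> v)) + - pi"
    using assms(4) by (simp add: algebra_simps)
  then have shift: "?c (t + h) = - ?c t"
    by (simp only: cis_mult[symmetric]) (simp add: complex_eq_iff)
  have "(\<integral>\<xi>. cis (z \<bullet> \<xi>) * fdiff h (Suc n) (\<lambda>s. g (\<xi> + s *\<^sub>R v)) t \<partial>lborel)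
      = (\<integral>\<xi>. cis (z \<bullet> \<xi>) * fdiff h n (\<lambda>s. g (\<xi> + s *\<^sub>R v)) (t + h) \<partial>lborel)
        - (\<integral>\<xi>. cis (z \<bullet> \<xi>) * fdiff h n (\<lambda>s. g (\<xi> + s *\<^sub>R v)) t \<partial>lborel)"
    unfolding fdiff.simps right_diff_distrib
    by (intro Bochner_Integration.integral_diff integrable_fdiff_line[OF assms(1-3)])
  also have "\<dots> = (-2) ^ n * ?c (t + h) * ?I - (-2) ^ n * ?c t * ?I"
    by (simp only: Suc.IH)
  also have "\<dots> = (-2) ^ Suc n * ?c t * ?I"
    by (simp only: shift power_Suc) algebra
  finally show ?case .
qed

lemma exists_Basis_norm_le_DIM_inner:
  fixes z :: "'a::euclidean_space"
  shows "\<exists>v\<in>Basis. norm z \<le> DIM('a) * \<bar>z \<bullet> v\<bar>"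
proof -
  define M where "M = Max ((\<lambda>b. \<bar>z \<bullet> b\<bar>) ` Basis)"
  have "M \<in> (\<lambda>b. \<bar>z \<bullet> b\<bar>) ` Basis"
    unfolding M_def by (rule Max_in) auto
  then obtain v where v: "v \<in> Basis" "M = \<bar>z \<bullet> v\<bar>" by blast
  have "\<bar>z \<bullet> b\<bar> \<le> \<bar>z \<bullet> v\<bar>" if "b \<in> Basis" for b
    unfolding v(2)[symmetric] M_def using that by (intro Max_ge) auto
  have "norm z \<le> (\<Sum>b\<in>Basis. \<bar>z \<bullet> b\<bar>)" by (rule norm_le_l1)
  also have "\<dots> \<le> (\<Sum>b\<in>(Basis::'a set). \<bar>z \<bullet> v\<bar>)" by (intro sum_mono) fact
  finally show ?thesis using v(1) by (intro bexI[of _ v]) simp_all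
qed

lemma norm_fourier_integral_le_fdiff:
  fixes g :: "'a::euclidean_space \<Rightarrow> complex" and N :: nat and R M h :: real
  assumes cont: "continuous_on UNIV g" and supp: "\<And>\<xi>. R < norm \<xi> \<Longrightarrow> g \<xi> = 0" "0 \<le> R"
    and v: "norm v = 1" and h: "h * (z \<bullet> v) = pi"
    and derivs: "\<And>\<xi>. \<exists>G. deriv_chain G \<and> G 0 = (\<lambda>s. g (\<xi> + s *\<^sub>R v))
      \<and> (\<forall>s. norm (G N s) \<le> M)"
  shows "2 ^ N * norm (\<integral>\<xi>. cis (z \<bullet> \<xi>) * g \<xi> \<partial>lborel)
    \<le> \<bar>h\<bar> ^ N * M * unit_ball_vol DIM('a) * (R + N * \<bar>h\<bar>) ^ DIM('a)"
proof -
  let ?D = "\<lambda>\<xi>. cis (z \<bullet> \<xi>) * fdiff h N (\<lambda>s. g (\<xi> + s *\<^sub>R v)) 0"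
  have "norm (?D \<xi>) \<le> \<bar>h\<bar> ^ N * M" for \<xi>
  proof -
    obtain G where "deriv_chain G" "G 0 = (\<lambda>s. g (\<xi> + s *\<^sub>R v))" "\<And>s. norm (G N s) \<le> M"
      using derivs by blast
    then show ?thesis using norm_fdiff_le[where G=G and n=N and M=M and h=h and s=0] by (simp add: norm_mult)
  qed
  moreover have "?D \<xi> = 0" if "R + N * \<bar>h\<bar> < norm \<xi>" for \<xi>
    using fdiff_line_eq_0[OF supp(1) v, where t=0 and n=N and h=h] that by simp
  ultimately have "norm (\<integral>\<xi>. ?D \<xi> \<partial>lborel)
      \<le> \<bar>h\<bar> ^ N * M * unit_ball_vol DIM('a) * (R + N * \<bar>h\<bar>) ^ DIM('a)"
    using supp(2) by (intro norm_integral_le_ball_volume integrable_fdiff_line[OF cont supp(1) v]) auto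
  moreover have "(\<integral>\<xi>. ?D \<xi> \<partial>lborel) = (-2) ^ N * (\<integral>\<xi>. cis (z \<bullet> \<xi>) * g \<xi> \<partial>lborel)"
    using integral_fdiff_line[OF cont supp(1) v h, where n=N and t=0] by simp
  ultimately show ?thesis by (simp add: norm_mult norm_power)
qed

lemma fourier_integral_decay_far:
  fixes g :: "'a::euclidean_space \<Rightarrow> complex" and N :: nat and R M :: real
  assumes cont: "continuous_on UNIV g" and supp: "\<And>\<xi>. R < norm \<xi> \<Longrightarrow> g \<xi> = 0" "0 \<le> R"
    and M: "0 \<le> M"
    and derivs: "\<And>\<xi> v. v \<in> Basis \<Longrightarrow>
      \<exists>G. deriv_chain G \<and> G 0 = (\<lambda>s. g (\<xi> + s *\<^sub>R v)) \<and> (\<forall>s. norm (G N s) \<le> M)"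
    and z: "DIM('a) \<le> norm z"
  shows "norm (\<integral>\<xi>. cis (z \<bullet> \<xi>) * g \<xi> \<partial>lborel) * (1 + norm z) ^ N
    \<le> M * unit_ball_vol DIM('a) * (R + N * pi) ^ DIM('a) * (pi * DIM('a)) ^ N"
proof -
  let ?I = "\<integral>\<xi>. cis (z \<bullet> \<xi>) * g \<xi> \<partial>lborel" and ?d = "DIM('a)" and ?V = "unit_ball_vol DIM('a)"
  have d: "1 \<le> real ?d"
    using DIM_positive[where 'a='a] by linarith
  obtain v where v: "v \<in> Basis" "norm z \<le> ?d * \<bar>z \<bullet> v\<bar>"
    using exists_Basis_norm_le_DIM_inner by blast
  have "1 \<le> \<bar>z \<bullet> v\<bar>"
    using z v(2) d by (smt (verit) mult_le_cancel_left1)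
  define h where "h = pi / (z \<bullet> v)"
  have h: "h * (z \<bullet> v) = pi" "\<bar>h\<bar> \<le> pi" "\<bar>h\<bar> * (1 + norm z) \<le> 2 * pi * ?d"
  proof -
    show "h * (z \<bullet> v) = pi" "\<bar>h\<bar> \<le> pi"
      using \<open>1 \<le> \<bar>z \<bullet> v\<bar>\<close> by (auto simp: h_def abs_divide divide_le_eq)
    have "1 + norm z \<le> 2 * (?d * \<bar>z \<bullet> v\<bar>)"
      using v(2) z d by linarith
    then have "\<bar>h\<bar> * (1 + norm z) \<le> \<bar>h\<bar> * (2 * (?d * \<bar>z \<bullet> v\<bar>))"
      by (rule mult_left_mono) simp
    also have "\<dots> = 2 * ?d * \<bar>h * (z \<bullet> v)\<bar>" by (simp add: abs_mult)
    finally show "\<bar>h\<bar> * (1 + norm z) \<le> 2 * pi * ?d"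
      using \<open>h * (z \<bullet> v) = pi\<close> by (simp add: mult_ac)
  qed
  have "2 ^ N * norm ?I \<le> \<bar>h\<bar> ^ N * M * ?V * (R + N * \<bar>h\<bar>) ^ ?d"
    using v(1) by (intro norm_fourier_integral_le_fdiff[OF cont supp _ h(1)] derivs) auto
  also have "\<dots> \<le> \<bar>h\<bar> ^ N * M * ?V * (R + N * pi) ^ ?d"
    using h(2) supp(2) M by (intro mult_left_mono power_mono) (auto intro: mult_left_mono)
  finally have "2 ^ N * norm ?I * (1 + norm z) ^ N
      \<le> (\<bar>h\<bar> * (1 + norm z)) ^ N * (M * ?V * (R + N * pi) ^ ?d)"
    by (rule mult_right_mono[THEN order_trans]) (simp_all add: power_mult_distrib mult_ac)
  also have "\<dots> \<le> (2 * pi * ?d) ^ N * (M * ?V * (R + N * pi) ^ ?d)"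
    using h(3) M supp(2) by (intro mult_right_mono power_mono) auto
  finally show ?thesis by (simp add: power_mult_distrib mult_ac)
qed

lemma fourier_integral_decay:
  fixes g :: "'a::euclidean_space \<Rightarrow> complex" and N :: nat and R M :: real
  assumes cont: "continuous_on UNIV g" and supp: "\<And>\<xi>. R < norm \<xi> \<Longrightarrow> g \<xi> = 0" "0 \<le> R"
    and bound: "\<And>\<xi>. norm (g \<xi>) \<le> M"
    and derivs: "\<And>\<xi> v. v \<in> Basis \<Longrightarrow>
      \<exists>G. deriv_chain G \<and> G 0 = (\<lambda>s. g (\<xi> + s *\<^sub>R v)) \<and> (\<forall>s. norm (G N s) \<le> M)"
  shows "norm (\<integral>\<xi>. cis (z \<bullet> \<xi>) * g \<xi> \<partial>lborel) * (1 + norm z) ^ N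
    \<le> M * unit_ball_vol DIM('a) * (R + N * pi) ^ DIM('a) * (1 + pi * DIM('a)) ^ N"
proof -
  let ?I = "\<integral>\<xi>. cis (z \<bullet> \<xi>) * g \<xi> \<partial>lborel" and ?d = "DIM('a)" and ?V = "unit_ball_vol DIM('a)"
  have M: "0 \<le> M" using bound by (meson norm_ge_zero order_trans)
  have large: "norm ?I * (1 + norm z) ^ N \<le> M * ?V * (R + N * pi) ^ ?d * (pi * ?d) ^ N"
    if "?d \<le> norm z"
    using fourier_integral_decay_far[OF cont supp M derivs that] .
  have small: "norm ?I * (1 + norm z) ^ N \<le> M * ?V * R ^ ?d * (1 + real ?d) ^ N"
    if z: "norm z < ?d"
  proof (rule mult_mono)
    show "norm ?I \<le> M * ?V * R ^ ?d"
      using bound supp by (intro norm_integral_le_ball_volume integrable_continuous_compact_support)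
        (auto simp: norm_mult intro!: continuous_intros cont)
  qed (use z M supp(2) in \<open>auto intro: power_mono\<close>)
  have MV: "0 \<le> M * ?V" using M by simp
  show ?thesis
  proof (cases "?d \<le> norm z")
    case True
    have "(pi * ?d) ^ N \<le> (1 + pi * ?d) ^ N" by (intro power_mono) auto
    with large[OF True] MV supp(2) show ?thesis
      by (meson mult_left_mono order_trans zero_le_power add_nonneg_nonneg pi_ge_zero mult_nonneg_nonneg of_nat_0_le_iff)
  next
    case False
    have "(1 + real ?d) ^ N \<le> (1 + pi * ?d) ^ N"
      using pi_ge_two by (intro power_mono) auto
    moreover have "R ^ ?d \<le> (R + N * pi) ^ ?d"
      using supp(2) by (intro power_mono) auto
    ultimately have "M * ?V * R ^ ?d * (1 + real ?d) ^ N \<le> M * ?V * (R + N * pi) ^ ?d * (1 + pi * ?d) ^ N"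
      using MV supp(2) by (intro mult_mono mult_left_mono) auto
    with small False show ?thesis by linarith
  qed
qed

lemma norm_leibniz_le:
  fixes G H :: "nat \<Rightarrow> real \<Rightarrow> 'a::real_normed_algebra_1" and BG BH :: "nat \<Rightarrow> real"
  assumes "\<And>j. norm (G j s) \<le> BG j" "\<And>j. norm (H j s) \<le> BH j"
  shows "norm (leibniz G H k s) \<le> (\<Sum>j\<le>k. (k choose j) * BG j * BH (k - j))"
  unfolding leibniz_def
proof (rule norm_sum[THEN order_trans], rule sum_mono)
  fix j
  have "norm (of_nat (k choose j) * G j s * H (k - j) s) \<le> norm (of_nat (k choose j) * G j s) * norm (H (k - j) s)"
    by (rule norm_mult_ineq)
  also have "\<dots> \<le> (k choose j) * norm (G j s) * norm (H (k - j) s)"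
    using norm_mult_ineq[of "of_nat (k choose j) :: 'a" "G j s"] by (intro mult_right_mono) simp_all
  also have "\<dots> \<le> (k choose j) * BG j * BH (k - j)"
  proof -
    have "0 \<le> BG j" using assms(1)[of j] norm_ge_zero[of "G j s"] by linarith
    then show ?thesis
      using assms by (intro mult_mono mult_left_mono) auto
  qed
  finally show "norm (of_nat (k choose j) * G j s * H (k - j) s) \<le> (k choose j) * BG j * BH (k - j)" .
qed

lemma Basis_vec_axis:
  assumes "(v :: real^'n::finite) \<in> Basis"
  obtains i where "v = axis i 1"
proof -
  obtain i and u :: real where "u \<in> Basis" "v = axis i u"
    using assms unfolding Basis_vec_def by blast
  moreover from \<open>u \<in> Basis\<close> have "u = 1"
    by (simp add: Basis_real_def)
  ultimately show thesis using that by blast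
qed

lemma norm_leibniz_cutoff_line_derivs_bounded:
  fixes a :: "(real^'n::finite) \<times> (real^'n) \<Rightarrow> complex" and \<eta> :: "real^'n \<Rightarrow> complex"
  assumes "hoermander m \<rho> \<delta> a" "smooth \<eta>" "\<And>\<xi>. R < norm \<xi> \<Longrightarrow> \<eta> \<xi> = 0"
  shows "\<exists>M. \<forall>x \<xi> i s.
    norm (leibniz (line_derivs a (xidir i) (x, \<xi>)) (line_derivs \<eta> (axis i 1) \<xi>) k s) \<le> M"
proof -
  define BA where "BA j i = (SOME B. 0 \<le> B \<and>
    (\<forall>x \<xi>. norm \<xi> \<le> R \<longrightarrow> norm (iter_ddir (replicate j (xidir i)) a (x, \<xi>)) \<le> B))" for j i
  have BA: "0 \<le> BA j i \<and>
    (\<forall>x \<xi>. norm \<xi> \<le> R \<longrightarrow> norm (iter_ddir (replicate j (xidir i)) a (x, \<xi>)) \<le> BA j i)" for j i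
    unfolding BA_def
    by (rule someI_ex)
      (use hoermander_xi_derivs_bounded[OF assms(1), where R=R and \<sigma>="replicate j i"] in
        \<open>simp only: map_replicate\<close>)
  define BE where "BE j i = (SOME B. 0 \<le> B \<and>
    (\<forall>\<xi>. norm (iter_ddir (replicate j (axis i 1)) \<eta> \<xi>) \<le> B))" for j i
  have BE: "0 \<le> BE j i \<and> (\<forall>\<xi>. norm (iter_ddir (replicate j (axis i 1)) \<eta> \<xi>) \<le> BE j i)" for j i
    unfolding BE_def
    by (rule someI_ex) (rule smooth_compact_support_bounded[OF assms(2)], rule assms(3))
  define M where "M = (\<Sum>i\<in>UNIV. \<Sum>j\<le>k. (k choose j) * BA j i * BE (k - j) i)"
  have "0 \<le> M" unfolding M_def using BA BE by (intro sum_nonneg) auto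
  have "norm (leibniz (line_derivs a (xidir i) (x, \<xi>)) (line_derivs \<eta> (axis i 1) \<xi>) k s) \<le> M"
    for x \<xi> i s
  proof (cases "norm (\<xi> + s *\<^sub>R axis i 1) \<le> R")
    case True
    have "(x, \<xi>) + s *\<^sub>R xidir i = (x, \<xi> + s *\<^sub>R axis i 1)"
      by (simp add: xidir_def)
    then have "norm (leibniz (line_derivs a (xidir i) (x, \<xi>)) (line_derivs \<eta> (axis i 1) \<xi>) k s)
        \<le> (\<Sum>j\<le>k. (k choose j) * BA j i * BE (k - j) i)"
      using BA BE True by (intro norm_leibniz_le) (simp_all add: line_derivs_def)
    also have "\<dots> \<le> M"
      unfolding M_def using BA BE
      by (intro member_le_sum[where f="\<lambda>i. \<Sum>j\<le>k. (k choose j) * BA j i * BE (k - j) i"] sum_nonneg) auto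
    finally show ?thesis .
  next
    case False
    then have "iter_ddir vs \<eta> (\<xi> + s *\<^sub>R axis i 1) = 0" for vs
      by (intro iter_ddir_eq_0_outside_cball[where R=R] assms(3)) auto
    then show ?thesis
      using \<open>0 \<le> M\<close> by (simp add: leibniz_def line_derivs_def)
  qed
  then show ?thesis by blast
qed

lemma cutoff_symbol_line_derivs_bounded:
  fixes a :: "(real^'n::finite) \<times> (real^'n) \<Rightarrow> complex" and \<eta> :: "real^'n \<Rightarrow> complex"
  assumes "hoermander m \<rho> \<delta> a" "smooth \<eta>" "\<And>\<xi>. R < norm \<xi> \<Longrightarrow> \<eta> \<xi> = 0"
  shows "\<exists>M. \<forall>x \<xi> v. v \<in> Basis \<longrightarrow> (\<exists>G. deriv_chain G
    \<and> G 0 = (\<lambda>s. a (x, \<xi> + s *\<^sub>R v) * \<eta> (\<xi> + s *\<^sub>R v)) \<and> (\<forall>s. norm (G k s) \<le> M))"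
proof -
  obtain M where M: "\<And>x \<xi> i s.
      norm (leibniz (line_derivs a (xidir i) (x, \<xi>)) (line_derivs \<eta> (axis i 1) \<xi>) k s) \<le> M"
    using norm_leibniz_cutoff_line_derivs_bounded[OF assms] by blast
  show ?thesis
  proof (intro exI[of _ M] allI impI)
    fix x \<xi> and v :: "real^'n"
    assume "v \<in> Basis"
    then obtain i where v: "v = axis i 1" by (rule Basis_vec_axis)
    let ?G = "leibniz (line_derivs a (xidir i) (x, \<xi>)) (line_derivs \<eta> (axis i 1) \<xi>)"
    show "\<exists>G. deriv_chain G \<and> G 0 = (\<lambda>s. a (x, \<xi> + s *\<^sub>R v) * \<eta> (\<xi> + s *\<^sub>R v))
        \<and> (\<forall>s. norm (G k s) \<le> M)"
    proof (intro exI[of _ ?G] conjI allI)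
      show "deriv_chain ?G"
        using assms by (intro deriv_chain_leibniz smooth_deriv_chain_line_derivs hoermander_smooth)
      show "?G 0 = (\<lambda>s. a (x, \<xi> + s *\<^sub>R v) * \<eta> (\<xi> + s *\<^sub>R v))"
        by (rule ext) (simp add: v line_derivs_def xidir_def)
      show "norm (?G k s) \<le> M" for s
        by (rule M)
    qed
  qed
qed

lemma cutoff_symbol_fourier_decay:
  fixes a :: "(real^'n::finite) \<times> (real^'n) \<Rightarrow> complex" and \<eta> :: "real^'n \<Rightarrow> complex" and N :: nat
  assumes "hoermander m \<rho> \<delta> a" "smooth \<eta>" "\<And>\<xi>. R < norm \<xi> \<Longrightarrow> \<eta> \<xi> = 0"
  shows "\<exists>C. \<forall>x z.
    norm (\<integral>\<xi>. cis (z \<bullet> \<xi>) * (a (x, \<xi>) * \<eta> \<xi>) \<partial>lborel) * (1 + norm z) ^ N \<le> C"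
proof -
  obtain M0 where M0: "\<And>x \<xi> v. v \<in> Basis \<Longrightarrow> \<exists>G. deriv_chain G
      \<and> G 0 = (\<lambda>s. a (x, \<xi> + s *\<^sub>R v) * \<eta> (\<xi> + s *\<^sub>R v)) \<and> (\<forall>s. norm (G 0 s) \<le> M0)"
    using cutoff_symbol_line_derivs_bounded[OF assms, where k=0] by blast
  obtain MN where MN: "\<And>x \<xi> v. v \<in> Basis \<Longrightarrow> \<exists>G. deriv_chain G
      \<and> G 0 = (\<lambda>s. a (x, \<xi> + s *\<^sub>R v) * \<eta> (\<xi> + s *\<^sub>R v)) \<and> (\<forall>s. norm (G N s) \<le> MN)"
    using cutoff_symbol_line_derivs_bounded[OF assms, where k=N] by blast
  obtain e :: "real^'n" where e: "e \<in> Basis" using nonempty_Basis by blast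
  let ?M = "max M0 MN" and ?R = "max R 0"
  have "norm (\<integral>\<xi>. cis (z \<bullet> \<xi>) * (a (x, \<xi>) * \<eta> \<xi>) \<partial>lborel) * (1 + norm z) ^ N
      \<le> ?M * unit_ball_vol DIM(real^'n) * (?R + N * pi) ^ DIM(real^'n) * (1 + pi * DIM(real^'n)) ^ N"
    for x z
  proof -
    have "continuous_on UNIV (\<lambda>\<xi>. a (x, \<xi>) * \<eta> \<xi>)"
      by (rule continuous_on_cutoff_symbol[OF assms(1,2)])
    moreover have "norm (a (x, \<xi>) * \<eta> \<xi>) \<le> ?M" for \<xi>
    proof -
      obtain G where G: "deriv_chain G \<and> G 0 = (\<lambda>s. a (x, \<xi> + s *\<^sub>R e) * \<eta> (\<xi> + s *\<^sub>R e))
          \<and> (\<forall>s. norm (G 0 s) \<le> M0)"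
        using M0[OF e, of x \<xi>] by (rule exE)
      then have "norm (G 0 0) \<le> M0" by blast
      with G show ?thesis by simp
    qed
    moreover have "\<exists>G. deriv_chain G \<and> G 0 = (\<lambda>s. a (x, \<xi> + s *\<^sub>R v) * \<eta> (\<xi> + s *\<^sub>R v))
        \<and> (\<forall>s. norm (G N s) \<le> ?M)" if "v \<in> Basis" for \<xi> v
      using MN[OF that, of x \<xi>] by (meson max.coboundedI2)
    ultimately show ?thesis
      using assms(3) by (intro fourier_integral_decay[where g="\<lambda>\<xi>. a (x, \<xi>) * \<eta> \<xi>"]) auto
  qed
  then show ?thesis by blast
qed

section \<open>The decay kernel and the maximal function\<close>

definition decay_kernel :: "'a::euclidean_space \<Rightarrow> real" where
  "decay_kernel z = 1 / (1 + norm z) ^ (DIM('a) + 1)"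

definition decay_kernel_mass :: "nat \<Rightarrow> real" where
  "decay_kernel_mass d = unit_ball_vol d * 2 ^ (d + 2)"

lemma decay_kernel_nonneg [simp]: "0 \<le> decay_kernel z"
  by (simp add: decay_kernel_def)

lemma decay_kernel_minus_commute: "decay_kernel (x - y) = decay_kernel (y - x)"
  by (simp add: decay_kernel_def norm_minus_commute)

lemma continuous_on_decay_kernel: "continuous_on UNIV (decay_kernel :: 'a::euclidean_space \<Rightarrow> real)"
proof -
  have "1 + norm z \<noteq> 0" for z :: 'a
    by (metis add_pos_nonneg norm_ge_zero zero_less_one less_irrefl)
  then show ?thesis
    unfolding decay_kernel_def by (intro continuous_intros) auto
qed

lemma borel_measurable_decay_kernel [measurable]:
  "(decay_kernel :: 'a::euclidean_space \<Rightarrow> real) \<in> borel_measurable borel"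
  by (rule borel_measurable_continuous_onI[OF continuous_on_decay_kernel])

lemma decay_kernel_mass_nonneg [simp]: "0 \<le> decay_kernel_mass d"
  by (simp add: decay_kernel_mass_def)

lemma inverse_power_le_dyadic_sum:
  fixes z :: "'a::real_normed_vector"
  shows "ennreal (1 / (1 + norm z) ^ N) \<le> (\<Sum>j. ennreal (2 ^ N / 2 ^ (j * N)) * indicator (ball 0 (2 ^ j)) z)"
proof -
  have ex: "\<exists>j. norm z < (2::real) ^ j" using real_arch_pow[of 2 "norm z"] by auto
  define j where "j = (LEAST j. norm z < (2::real) ^ j)"
  have j1: "norm z < 2 ^ j" unfolding j_def by (rule LeastI_ex[OF ex])
  have j2: "(2::real) ^ j \<le> 2 * (1 + norm z)"
  proof (cases j)
    case (Suc i)
    then have "\<not> norm z < 2 ^ i" unfolding j_def using not_less_Least[of i] by (metis j_def lessI)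
    then show ?thesis using Suc by simp
  qed simp
  have "(2::real) ^ (j * N) \<le> 2 ^ N * (1 + norm z) ^ N"
    using power_mono[OF j2, of N] by (simp only: power_mult power_mult_distrib) simp
  then have "1 / (1 + norm z) ^ N \<le> 2 ^ N / 2 ^ (j * N)"
    by (simp add: divide_simps mult.commute add_pos_nonneg)
  then have "ennreal (1 / (1 + norm z) ^ N) \<le> ennreal (2 ^ N / 2 ^ (j * N)) * indicator (ball 0 (2 ^ j)) z"
    using j1 by (simp add: ennreal_leI)
  also have "\<dots> \<le> (\<Sum>j. ennreal (2 ^ N / 2 ^ (j * N)) * indicator (ball 0 (2 ^ j)) z)"
  proof -
    define F where "F = (\<lambda>j. ennreal (2 ^ N / 2 ^ (j * N)) * (indicator (ball 0 (2 ^ j)) z :: ennreal))"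
    have "sum F {j} \<le> suminf F" by (rule sum_le_suminf) auto
    then have "F j \<le> suminf F" by simp
    then show ?thesis by (simp only: F_def)
  qed
  finally show ?thesis .
qed

lemma suminf_dyadic_ball_volumes:
  "(\<Sum>j. ennreal (2 ^ (d + 1) / 2 ^ (j * (d + 1))) * ennreal (unit_ball_vol d * (2 ^ j) ^ d))
    = ennreal (decay_kernel_mass d)"
proof -
  have "(2::real) ^ (d + 1) / 2 ^ (j * (d + 1)) * (unit_ball_vol d * (2 ^ j) ^ d)
      = unit_ball_vol d * 2 ^ (d + 1) * (1 / 2) ^ j" for j
    by (simp add: field_simps power_mult[symmetric] power_add[symmetric] algebra_simps)
  then have "(\<Sum>j. ennreal (2 ^ (d + 1) / 2 ^ (j * (d + 1))) * ennreal (unit_ball_vol d * (2 ^ j) ^ d))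
      = (\<Sum>j. ennreal (unit_ball_vol d * 2 ^ (d + 1) * (1 / 2) ^ j))"
    by (simp add: ennreal_mult[symmetric])
  also have "\<dots> = ennreal (\<Sum>j. unit_ball_vol d * 2 ^ (d + 1) * (1 / 2 :: real) ^ j)"
    by (rule suminf_ennreal2) (auto intro!: summable_mult summable_geometric)
  also have "(\<Sum>j. unit_ball_vol d * 2 ^ (d + 1) * (1 / 2 :: real) ^ j) = decay_kernel_mass d"
    by (subst suminf_mult) (auto simp: suminf_geometric decay_kernel_mass_def)
  finally show ?thesis .
qed

text \<open>Dyadic decomposition of the kernel: only averages over balls of radius \<open>2^j \<ge> 1\<close> occur.\<close>

lemma nn_integral_decay_kernel_le:
  fixes g :: "'a::euclidean_space \<Rightarrow> ennreal"
  assumes [measurable]: "g \<in> borel_measurable borel"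
    and avg: "\<And>r. 1 \<le> r \<Longrightarrow>
      (\<integral>\<^sup>+x. g x * indicator (ball y r) x \<partial>lborel) \<le> A * emeasure lborel (ball y r)"
  shows "(\<integral>\<^sup>+x. g x * decay_kernel (x - y) \<partial>lborel) \<le> ennreal (decay_kernel_mass DIM('a)) * A"
proof -
  let ?d = "DIM('a)" and ?N = "DIM('a) + 1"
  have [measurable]: "ball y r \<in> sets borel" for r by simp
  define c where "c j = ennreal (2 ^ ?N / 2 ^ (j * ?N))" for j :: nat
  have "(\<integral>\<^sup>+x. g x * decay_kernel (x - y) \<partial>lborel)
      \<le> (\<integral>\<^sup>+x. (\<Sum>j. c j * (g x * indicator (ball y (2 ^ j)) x)) \<partial>lborel)"
  proof (rule nn_integral_mono)
    fix x
    have "indicator (ball 0 (2 ^ j)) (x - y) = (indicator (ball y (2 ^ j)) x :: ennreal)" for j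
      by (simp add: indicator_def dist_norm norm_minus_commute)
    then have "g x * decay_kernel (x - y) \<le> g x * (\<Sum>j. c j * indicator (ball y (2 ^ j)) x)"
      using inverse_power_le_dyadic_sum[where N="?N" and z="x - y"]
      unfolding c_def decay_kernel_def by (intro mult_left_mono) auto
    then show "g x * decay_kernel (x - y) \<le> (\<Sum>j. c j * (g x * indicator (ball y (2 ^ j)) x))"
      by (simp add: ennreal_suminf_cmult[symmetric] mult_ac)
  qed
  also have "\<dots> = (\<Sum>j. \<integral>\<^sup>+x. c j * (g x * indicator (ball y (2 ^ j)) x) \<partial>lborel)"
    by (rule nn_integral_suminf) measurable
  also have "\<dots> = (\<Sum>j. c j * \<integral>\<^sup>+x. g x * indicator (ball y (2 ^ j)) x \<partial>lborel)"
    by (subst nn_integral_cmult) auto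
  also have "\<dots> \<le> (\<Sum>j. c j * (A * ennreal (unit_ball_vol ?d * (2 ^ j) ^ ?d)))"
  proof (intro suminf_le allI mult_left_mono)
    fix j :: nat
    show "(\<integral>\<^sup>+x. g x * indicator (ball y (2 ^ j)) x \<partial>lborel) \<le> A * ennreal (unit_ball_vol ?d * (2 ^ j) ^ ?d)"
      using avg[of "2 ^ j"] emeasure_ball[of "2 ^ j" y] by simp
  qed auto
  also have "\<dots> = (\<Sum>j. A * (c j * ennreal (unit_ball_vol ?d * (2 ^ j) ^ ?d)))"
    by (simp add: mult.left_commute)
  also have "\<dots> = A * (\<Sum>j. c j * ennreal (unit_ball_vol ?d * (2 ^ j) ^ ?d))"
    by (rule ennreal_suminf_cmult)
  also have "(\<Sum>j. c j * ennreal (unit_ball_vol ?d * (2 ^ j) ^ ?d)) = ennreal (decay_kernel_mass ?d)"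
    unfolding c_def by (rule suminf_dyadic_ball_volumes)
  finally show ?thesis by (simp add: mult.commute)
qed

lemma nn_integral_decay_kernel:
  fixes x :: "'a::euclidean_space"
  shows "(\<integral>\<^sup>+y. decay_kernel (y - x) \<partial>lborel) \<le> ennreal (decay_kernel_mass DIM('a))"
  using nn_integral_decay_kernel_le[where g="\<lambda>_. 1" and A=1 and y=x]
  by (simp add: nn_integral_indicator)

lemma A1star_ball_average:
  fixes w :: "real^'n::finite \<Rightarrow> real"
  assumes "1 \<le> r"
  shows "(\<integral>\<^sup>+x. ennreal (w x) * indicator (ball y r) x \<partial>lborel) \<le> A1star w y * emeasure lborel (ball y r)"
proof -
  let ?I = "\<integral>\<^sup>+x. ennreal (w x) * indicator (ball y r) x \<partial>lborel" and ?\<mu> = "emeasure lborel (ball y r)"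
  have "?\<mu> \<noteq> 0" "?\<mu> \<noteq> \<infinity>"
  proof -
    have "unit_ball_vol (real CARD('n)) \<noteq> 0"
      using unit_ball_vol_pos[of "real CARD('n)"] by linarith
    then show "?\<mu> \<noteq> 0" "?\<mu> \<noteq> \<infinity>"
      using assms by (simp_all add: emeasure_ball)
  qed
  then have "?I = ?I / ?\<mu> * ?\<mu>"
    by (simp add: ennreal_divide_times top.not_eq_extremum)
  also have "\<dots> \<le> A1star w y * ?\<mu>"
    unfolding A1star_def using assms by (intro mult_right_mono SUP_upper2[of r]) auto
  finally show ?thesis .
qed

lemma nn_integral_cmult_le:
  assumes "c < top"
  shows "(\<integral>\<^sup>+ x. c * f x \<partial>M) \<le> c * integral\<^sup>N M f"
proof (cases "c = 0")
  case True then show ?thesis by simp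
next
  case False
  show ?thesis
    unfolding nn_integral_def[of M "\<lambda>x. c * f x"]
  proof (rule SUP_least, clarify)
    fix s assume s: "simple_function M s" "s \<le> (\<lambda>x. c * f x)"
    define s' where "s' = (\<lambda>x. s x / c)"
    have s'sf: "simple_function M s'" unfolding s'_def by (rule simple_function_compose1[OF s(1)])
    have eq: "s x = c * s' x" for x
      unfolding s'_def using False assms
      by (simp add: ennreal_times_divide) (metis ennreal_mult_divide_eq mult.commute top.not_eq_extremum)
    have "s' \<le> f"
    proof (rule le_funI)
      fix x
      have "c * s' x \<le> c * f x" using s(2) eq[of x] by (metis le_fun_def)
      then show "s' x \<le> f x" using False assms
        by (metis ennreal_mult_le_mult_iff top.not_eq_extremum)
    qed
    have "integral\<^sup>S M s = c * integral\<^sup>S M s'"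
      by (subst simple_integral_mult[OF s'sf, symmetric]) (simp add: eq[abs_def])
    also have "integral\<^sup>S M s' = integral\<^sup>N M s'" by (simp add: nn_integral_eq_simple_integral[OF s'sf])
    also have "\<dots> \<le> integral\<^sup>N M f" by (rule nn_integral_mono) (use \<open>s' \<le> f\<close> in \<open>auto simp: le_fun_def\<close>)
    finally show "integral\<^sup>S M s \<le> c * integral\<^sup>N M f"
      by (metis mult_left_mono zero_le)
  qed
qed

lemma schwartz_integrable:
  fixes f :: "real^'n::finite \<Rightarrow> complex"
  assumes "schwartz f"
  shows "integrable lborel f"
proof -
  obtain C where C: "\<And>x. (1 + norm x) ^ (CARD('n) + 1) * norm (f x) \<le> C"
    using assms unfolding schwartz_def by (metis iter_ddir.simps(1) list.map(1))
  have "0 \<le> C" using C[of 0] by (smt (verit) norm_ge_zero zero_le_power mult_nonneg_nonneg)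
  have bound: "norm (f x) \<le> C * decay_kernel x" for x
    using C[of x] by (simp add: decay_kernel_def field_simps add_pos_nonneg)
  have "(\<integral>\<^sup>+x. norm (f x) \<partial>lborel) \<le> (\<integral>\<^sup>+x. ennreal C * decay_kernel (x - (0::real^'n)) \<partial>lborel)"
    by (rule nn_integral_mono) (use bound \<open>0 \<le> C\<close> in \<open>simp add: ennreal_mult[symmetric] ennreal_leI\<close>)
  also have "\<dots> \<le> ennreal C * ennreal (decay_kernel_mass CARD('n))"
    using nn_integral_decay_kernel[of "0 :: real^'n"] by (simp add: nn_integral_cmult mult_left_mono)
  also have "\<dots> < \<infinity>" by (simp add: ennreal_mult_less_top)
  finally show ?thesis
    using smooth_continuous[of f "[]"] assms unfolding schwartz_def
    by (intro integrableI_bounded) (auto intro: borel_measurable_continuous_onI)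
qed

section \<open>The weighted estimate\<close>

definition symbol_kernel ::
    "((real^'n::finite) \<times> (real^'n) \<Rightarrow> complex) \<Rightarrow> real^'n \<Rightarrow> real^'n \<Rightarrow> complex" where
  "symbol_kernel b x z = (\<integral>\<xi>. cis (z \<bullet> \<xi>) * b (x, \<xi>) \<partial>lborel)"

lemma integrable_pdo_integrand:
  fixes b :: "(real^'n::finite) \<times> (real^'n) \<Rightarrow> complex" and f :: "real^'n \<Rightarrow> complex"
  assumes b: "integrable lborel (\<lambda>\<xi>. b (x, \<xi>))" and f: "integrable lborel f"
  shows "integrable (lborel \<Otimes>\<^sub>M lborel)
    (\<lambda>(\<xi>, y). cis (x \<bullet> \<xi>) * b (x, \<xi>) * (cis (- (y \<bullet> \<xi>)) * f y))"
    (is "integrable _ (\<lambda>(\<xi>, y). ?G \<xi> y)")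
proof -
  have [measurable]: "(\<lambda>\<xi>. b (x, \<xi>)) \<in> borel_measurable borel" "f \<in> borel_measurable borel"
    using b f by auto
  have "(\<lambda>p::(real^'n) \<times> (real^'n). cis (x \<bullet> fst p) * cis (- (snd p \<bullet> fst p))) \<in> borel_measurable borel"
    by (intro borel_measurable_continuous_onI continuous_intros)
  then have [measurable]:
    "(\<lambda>p. cis (x \<bullet> fst p) * cis (- (snd p \<bullet> fst p))) \<in> borel_measurable (lborel \<Otimes>\<^sub>M lborel)"
    by (simp add: lborel_prod)
  have "(\<lambda>p. cis (x \<bullet> fst p) * cis (- (snd p \<bullet> fst p)) * (b (x, fst p) * f (snd p)))
      \<in> borel_measurable (lborel \<Otimes>\<^sub>M lborel)"
    by measurable
  moreover have "(\<lambda>(\<xi>, y). ?G \<xi> y)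
      = (\<lambda>p. cis (x \<bullet> fst p) * cis (- (snd p \<bullet> fst p)) * (b (x, fst p) * f (snd p)))"
    by (auto simp: mult_ac)
  ultimately have G_meas: "(\<lambda>(\<xi>, y). ?G \<xi> y) \<in> borel_measurable (lborel \<Otimes>\<^sub>M lborel)"
    by simp
  have norm_G: "norm (?G \<xi> y) = norm (b (x, \<xi>)) * norm (f y)" for \<xi> y
    by (simp add: norm_mult)
  show ?thesis
  proof (rule lborel_pair.Fubini_integrable[OF G_meas])
    show "integrable lborel (\<lambda>\<xi>. \<integral>y. norm (case (\<xi>, y) of (\<xi>, y) \<Rightarrow> ?G \<xi> y) \<partial>lborel)"
      using b by (simp add: norm_G integrable_norm)
    show "AE \<xi> in lborel. integrable lborel (\<lambda>y. case (\<xi>, y) of (\<xi>, y) \<Rightarrow> ?G \<xi> y)"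
    proof (rule AE_I2)
      fix \<xi> :: "real^'n"
      have meas: "(\<lambda>y. ?G \<xi> y) \<in> borel_measurable lborel"
        using measurable_Pair2[OF G_meas, of \<xi>] by simp
      have "integrable lborel (\<lambda>y. norm (b (x, \<xi>)) * norm (f y))"
        using f by (intro integrable_mult_right integrable_norm)
      then have "integrable lborel (\<lambda>y. ?G \<xi> y)"
        by (rule Bochner_Integration.integrable_bound[OF _ meas]) (simp add: norm_G)
      then show "integrable lborel (\<lambda>y. case (\<xi>, y) of (\<xi>, y) \<Rightarrow> ?G \<xi> y)" by simp
    qed
  qed
qed

lemma pdo_eq_integral_symbol_kernel:
  fixes b :: "(real^'n::finite) \<times> (real^'n) \<Rightarrow> complex" and f :: "real^'n \<Rightarrow> complex"
  assumes b: "integrable lborel (\<lambda>\<xi>. b (x, \<xi>))" and f: "integrable lborel f"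
  shows "integrable lborel (\<lambda>y. f y * symbol_kernel b x (x - y))"
    and "pdo b f x = (\<integral>y. f y * symbol_kernel b x (x - y) \<partial>lborel)"
proof -
  define G where "G \<xi> y = cis (x \<bullet> \<xi>) * b (x, \<xi>) * (cis (- (y \<bullet> \<xi>)) * f y)" for \<xi> y
  have G_int: "integrable (lborel \<Otimes>\<^sub>M lborel) (\<lambda>(\<xi>, y). G \<xi> y)"
    unfolding G_def by (rule integrable_pdo_integrand[OF b f])
  have inner: "(\<integral>\<xi>. G \<xi> y \<partial>lborel) = f y * symbol_kernel b x (x - y)" for y
  proof -
    have "cis ((x - y) \<bullet> \<xi>) = cis (x \<bullet> \<xi>) * cis (- (y \<bullet> \<xi>))" for \<xi>
      by (simp add: inner_diff_left cis_mult)
    then have "G \<xi> y = f y * (cis ((x - y) \<bullet> \<xi>) * b (x, \<xi>))" for \<xi>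
      by (simp add: G_def mult_ac)
    then show ?thesis by (simp add: symbol_kernel_def)
  qed
  show "integrable lborel (\<lambda>y. f y * symbol_kernel b x (x - y))"
    using lborel_pair.integrable_snd[OF G_int] by (simp add: inner)
  have "pdo b f x = (\<integral>\<xi>. (\<integral>y. G \<xi> y \<partial>lborel) \<partial>lborel)"
    by (simp add: pdo_def fourier_def G_def)
  also have "\<dots> = (\<integral>y. (\<integral>\<xi>. G \<xi> y \<partial>lborel) \<partial>lborel)"
    by (rule lborel_pair.Fubini_integral[OF G_int, symmetric])
  finally show "pdo b f x = (\<integral>y. f y * symbol_kernel b x (x - y) \<partial>lborel)"
    by (simp add: inner)
qed

lemma nn_integral_decay_kernel_Cauchy_Schwarz:
  fixes f :: "'a::euclidean_space \<Rightarrow> 'b::real_normed_vector"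
  assumes [measurable]: "f \<in> borel_measurable borel"
  shows "(\<integral>\<^sup>+y. norm (f y) * decay_kernel (x - y) \<partial>lborel) ^ 2
    \<le> ennreal (decay_kernel_mass DIM('a)) * (\<integral>\<^sup>+y. decay_kernel (x - y) * (norm (f y))\<^sup>2 \<partial>lborel)"
proof -
  let ?k = "\<lambda>y. decay_kernel (x - y)"
  have "(\<integral>\<^sup>+y. norm (f y) * ?k y \<partial>lborel) ^ 2
      = (\<integral>\<^sup>+y. ennreal (sqrt (?k y)) * ennreal (sqrt (?k y) * norm (f y)) \<partial>lborel) ^ 2"
    by (intro arg_cong[where f="\<lambda>t. t ^ 2"] nn_integral_cong)
      (simp add: ennreal_mult[symmetric] mult.assoc[symmetric] real_sqrt_mult[symmetric])
  also have "\<dots> \<le> (\<integral>\<^sup>+y. ennreal (sqrt (?k y)) ^ 2 \<partial>lborel)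
      * (\<integral>\<^sup>+y. ennreal (sqrt (?k y) * norm (f y)) ^ 2 \<partial>lborel)"
    by (rule Cauchy_Schwarz_nn_integral) measurable
  also have "\<dots> = (\<integral>\<^sup>+y. decay_kernel (y - x) \<partial>lborel) * (\<integral>\<^sup>+y. ?k y * (norm (f y))\<^sup>2 \<partial>lborel)"
    by (simp add: ennreal_power power_mult_distrib decay_kernel_minus_commute[of x])
  also have "\<dots> \<le> ennreal (decay_kernel_mass DIM('a)) * (\<integral>\<^sup>+y. ?k y * (norm (f y))\<^sup>2 \<partial>lborel)"
    using nn_integral_decay_kernel[of x] by (intro mult_right_mono) simp_all
  finally show ?thesis .
qed

lemma pdo_sq_le_decay_kernel_average:
  fixes b :: "(real^'n::finite) \<times> (real^'n) \<Rightarrow> complex" and f :: "real^'n \<Rightarrow> complex"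
  assumes b: "\<And>x. integrable lborel (\<lambda>\<xi>. b (x, \<xi>))"
    and K: "\<And>x z. norm (symbol_kernel b x z) \<le> C * decay_kernel z"
    and f: "integrable lborel f"
  shows "ennreal ((norm (pdo b f x))\<^sup>2)
    \<le> ennreal (C\<^sup>2 * decay_kernel_mass CARD('n)) * (\<integral>\<^sup>+y. decay_kernel (x - y) * (norm (f y))\<^sup>2 \<partial>lborel)"
proof -
  have C: "0 \<le> C"
    using K[of x 0] by (simp add: decay_kernel_def) (meson norm_ge_zero order_trans)
  have [measurable]: "f \<in> borel_measurable borel" using f by auto
  let ?I = "\<integral>\<^sup>+y. norm (f y) * decay_kernel (x - y) \<partial>lborel"
  have "ennreal (norm (pdo b f x)) \<le> (\<integral>\<^sup>+y. norm (f y * symbol_kernel b x (x - y)) \<partial>lborel)"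
    unfolding pdo_eq_integral_symbol_kernel(2)[OF b f]
    by (rule integral_norm_bound_ennreal[OF pdo_eq_integral_symbol_kernel(1)[OF b f]])
  also have "\<dots> \<le> (\<integral>\<^sup>+y. ennreal C * (norm (f y) * decay_kernel (x - y)) \<partial>lborel)"
  proof (rule nn_integral_mono)
    fix y
    have "norm (f y) * norm (symbol_kernel b x (x - y)) \<le> norm (f y) * (C * decay_kernel (x - y))"
      using K by (intro mult_left_mono) auto
    then show "ennreal (norm (f y * symbol_kernel b x (x - y))) \<le> ennreal C * (norm (f y) * decay_kernel (x - y))"
      using C by (simp add: norm_mult ennreal_mult[symmetric] mult_ac ennreal_leI)
  qed
  also have "\<dots> = ennreal C * ?I"
    by (rule nn_integral_cmult) measurable
  finally have pdo_le: "ennreal (norm (pdo b f x)) \<le> ennreal C * ?I" .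
  have "ennreal ((norm (pdo b f x))\<^sup>2) = ennreal (norm (pdo b f x)) ^ 2"
    by (simp add: ennreal_power)
  also have "\<dots> \<le> (ennreal C * ?I) ^ 2"
    by (rule power_mono[OF pdo_le]) simp
  also have "\<dots> = ennreal (C\<^sup>2) * ?I ^ 2"
    using C by (simp add: power_mult_distrib ennreal_power)
  also have "\<dots> \<le> ennreal (C\<^sup>2 * decay_kernel_mass CARD('n))
      * (\<integral>\<^sup>+y. decay_kernel (x - y) * (norm (f y))\<^sup>2 \<partial>lborel)"
    using mult_left_mono[OF nn_integral_decay_kernel_Cauchy_Schwarz[of f x], of "ennreal (C\<^sup>2)"]
    by (simp add: ennreal_mult mult.assoc)
  finally show ?thesis .
qed

lemma nn_integral_decay_kernel_convolution_le_A1star: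
  fixes u w :: "real^'n::finite \<Rightarrow> real"
  assumes [measurable]: "u \<in> borel_measurable borel" "w \<in> borel_measurable borel"
    and "\<And>y. 0 \<le> u y" "\<And>x. 0 \<le> w x"
  shows "(\<integral>\<^sup>+x. (\<integral>\<^sup>+y. decay_kernel (x - y) * u y \<partial>lborel) * w x \<partial>lborel)
    \<le> ennreal (decay_kernel_mass CARD('n)) * (\<integral>\<^sup>+y. u y * A1star w y \<partial>lborel)"
proof -
  let ?c = "decay_kernel_mass CARD('n)"
  let ?H = "\<lambda>x y. ennreal (decay_kernel (x - y) * u y) * w x"
  have "(\<integral>\<^sup>+x. (\<integral>\<^sup>+y. decay_kernel (x - y) * u y \<partial>lborel) * w x \<partial>lborel)
      = (\<integral>\<^sup>+x. (\<integral>\<^sup>+y. ?H x y \<partial>lborel) \<partial>lborel)"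
    by (intro nn_integral_cong nn_integral_multc[symmetric]) measurable
  also have "\<dots> = (\<integral>\<^sup>+y. (\<integral>\<^sup>+x. ?H x y \<partial>lborel) \<partial>lborel)"
    by (rule lborel_pair.Fubini'[symmetric]) (simp add: lborel_prod[symmetric])
  also have "\<dots> \<le> (\<integral>\<^sup>+y. ennreal ?c * (u y * A1star w y) \<partial>lborel)"
  proof (rule nn_integral_mono)
    fix y
    have "(\<integral>\<^sup>+x. ?H x y \<partial>lborel) = u y * (\<integral>\<^sup>+x. ennreal (w x) * decay_kernel (x - y) \<partial>lborel)"
      using assms(3,4)
      by (subst nn_integral_cmult[symmetric]) (auto intro!: nn_integral_cong simp: ennreal_mult mult_ac)
    also have "\<dots> \<le> u y * (ennreal ?c * A1star w y)"
      using nn_integral_decay_kernel_le[of "\<lambda>x. ennreal (w x)" y "A1star w y", OF _ A1star_ball_average]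
      by (intro mult_left_mono) simp_all
    finally show "(\<integral>\<^sup>+x. ?H x y \<partial>lborel) \<le> ennreal ?c * (u y * A1star w y)"
      by (simp add: mult_ac)
  qed
  also have "\<dots> \<le> ennreal ?c * (\<integral>\<^sup>+y. u y * A1star w y \<partial>lborel)"
    by (rule nn_integral_cmult_le) simp
  finally show ?thesis .
qed

lemma weighted_pdo_estimate:
  fixes b :: "(real^'n::finite) \<times> (real^'n) \<Rightarrow> complex" and f :: "real^'n \<Rightarrow> complex"
    and w :: "real^'n \<Rightarrow> real"
  assumes b: "\<And>x. integrable lborel (\<lambda>\<xi>. b (x, \<xi>))"
    and K: "\<And>x z. norm (symbol_kernel b x z) \<le> C * decay_kernel z"
    and f: "integrable lborel f"
    and w: "\<And>x. 0 \<le> w x" "w \<in> borel_measurable borel"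
  shows "(\<integral>\<^sup>+x. (norm (pdo b f x))\<^sup>2 * w x \<partial>lborel)
    \<le> ennreal (C\<^sup>2 * (decay_kernel_mass CARD('n))\<^sup>2) * (\<integral>\<^sup>+x. (norm (f x))\<^sup>2 * A1star w x \<partial>lborel)"
proof -
  let ?c = "decay_kernel_mass CARD('n)"
  have [measurable]: "f \<in> borel_measurable borel" using f by auto
  have "(\<integral>\<^sup>+x. (norm (pdo b f x))\<^sup>2 * w x \<partial>lborel)
      \<le> (\<integral>\<^sup>+x. ennreal (C\<^sup>2 * ?c)
            * ((\<integral>\<^sup>+y. decay_kernel (x - y) * (norm (f y))\<^sup>2 \<partial>lborel) * w x) \<partial>lborel)"
    using w(1) pdo_sq_le_decay_kernel_average[OF b K f]
    by (intro nn_integral_mono) (simp add: ennreal_mult mult.assoc[symmetric] mult_right_mono)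
  also have "\<dots> \<le> ennreal (C\<^sup>2 * ?c)
      * (\<integral>\<^sup>+x. (\<integral>\<^sup>+y. decay_kernel (x - y) * (norm (f y))\<^sup>2 \<partial>lborel) * w x \<partial>lborel)"
    by (rule nn_integral_cmult_le) simp
  also have "\<dots> \<le> ennreal (C\<^sup>2 * ?c) * (ennreal ?c * (\<integral>\<^sup>+y. (norm (f y))\<^sup>2 * A1star w y \<partial>lborel))"
    using w by (intro mult_left_mono nn_integral_decay_kernel_convolution_le_A1star) simp_all
  also have "\<dots> = ennreal (C\<^sup>2 * ?c\<^sup>2) * (\<integral>\<^sup>+y. (norm (f y))\<^sup>2 * A1star w y \<partial>lborel)"
  proof -
    have "ennreal (C\<^sup>2 * ?c * ?c) = ennreal (C\<^sup>2 * ?c) * ennreal ?c"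
      by (rule ennreal_mult) simp_all
    then show ?thesis by (simp only: power2_eq_square[of ?c] mult.assoc)
  qed
  finally show ?thesis .
qed

theorem proposition4p1:
  fixes m \<rho> \<delta> :: real
    and a :: "(real^'n::finite) \<times> (real^'n) \<Rightarrow> complex"
    and \<eta> :: "real^'n \<Rightarrow> complex"
  assumes "0 \<le> \<delta>" "\<delta> \<le> \<rho>" "\<rho> \<le> 1" "\<delta> < 1"
    and "hoermander m \<rho> \<delta> a"
    and "smooth \<eta>" "\<forall>\<xi>. 2 < norm \<xi> \<longrightarrow> \<eta> \<xi> = 0"
  shows "\<exists>C::real. \<forall>(w::real^'n \<Rightarrow> real) (f::real^'n \<Rightarrow> complex).
           (\<forall>x. 0 \<le> w x) \<longrightarrow> loc_integrable w \<longrightarrow> schwartz f \<longrightarrow>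
           (\<integral>\<^sup>+ x. ennreal ((norm (pdo (\<lambda>(x, \<xi>). a (x, \<xi>) * \<eta> \<xi>) f x))\<^sup>2 * w x) \<partial>lborel)
             \<le> ennreal C * (\<integral>\<^sup>+ x. ennreal ((norm (f x))\<^sup>2) * A1star w x \<partial>lborel)"
proof -
  let ?b = "\<lambda>(x, \<xi>). a (x, \<xi>) * \<eta> \<xi>"
  have supp: "\<And>\<xi>. 2 < norm \<xi> \<Longrightarrow> \<eta> \<xi> = 0" using assms(7) by blast
  obtain C where C: "\<And>x z. norm (symbol_kernel ?b x z) * (1 + norm z) ^ (CARD('n) + 1) \<le> C"
    using cutoff_symbol_fourier_decay[where R=2 and N="CARD('n) + 1", OF assms(5,6) supp]
    by (auto simp: symbol_kernel_def)
  have K: "norm (symbol_kernel ?b x z) \<le> C * decay_kernel z" for x z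
    using C[of x z] by (simp add: decay_kernel_def field_simps add_pos_nonneg)
  have "integrable lborel (\<lambda>\<xi>. a (x, \<xi>) * \<eta> \<xi>)" for x
    by (rule integrable_continuous_compact_support[where R=2, OF continuous_on_cutoff_symbol[OF assms(5,6)]])
      (simp add: supp)
  then have b: "integrable lborel (\<lambda>\<xi>. ?b (x, \<xi>))" for x
    by simp
  have "(\<integral>\<^sup>+ x. ennreal ((norm (pdo ?b f x))\<^sup>2 * w x) \<partial>lborel)
      \<le> ennreal (C\<^sup>2 * (decay_kernel_mass CARD('n))\<^sup>2)
        * (\<integral>\<^sup>+ x. ennreal ((norm (f x))\<^sup>2) * A1star w x \<partial>lborel)"
    if "\<forall>x. 0 \<le> w x" "loc_integrable w" "schwartz f" for w f
    using that by (intro weighted_pdo_estimate[OF b K schwartz_integrable]) (auto simp: loc_integrable_def)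
  then show ?thesis by blast
qed

end
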